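(* Fix a strategy $\mathcal{G}$ for the partial feedback game and let $H$ be the random complete history when $\pi\sim\mathcal{S}_{m,n}$ is uniform. There are absolute constants $c,c'>0$ such that if $0<\varepsilon\le \frac18$ and $n$ is sufficiently large in terms of $\varepsilon$ and $m$, then \[\Pr\Big[Y_0(H) > (1+4\varepsilon)\frac{b_0(H)}{n}\Big] \le c'\varepsilon^{-2}e^{-c \varepsilon^4 m}.\]
   Context: $\mathcal{S}_{m,n}$ is the set of words over $[n]$ in which each symbol appears exactly $m$ times (a deck of $mn$ cards). In the partial feedback game the guesser makes guesses $g_1,\dots,g_{mn}\in[n]$ sequentially; after guess $g_t$ they learn only $y_t\in\{0,1\}$, where $y_t=1$ iff $\pi_t=g_t$. A strategy chooses $g_t$ as a function of $(g_1,\dots,g_{t-1},y_1,\dots,y_{t-1})$. A history up to time $s$ is $h_s=((g_r)_{r\le s},(y_r)_{r\le s})$, $H_s$ is the random history up to time $s$, and $H=H_{mn}$. For a history $h_s$, $a_i(h_s)=|\{r\le s:g_r=i\}|$. The $t$-th guess, with $g_t=i$, is called subcritical if $a_i(H_{t-1})<\varepsilon mn$. $b_0(H)$ is the number of subcritical guesses and $Y_0(H)$ is the number of correct subcritical guesses. *)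

theory Defs
  imports "HOL-Probability.Probability"
begin

text \<open>Symbols are 0-indexed: [n] is rendered as {0..<n}.  A deck in S_{m,n} is a list of
  length m*n over {0..<n} in which every symbol occurs exactly m times.\<close>
definition decks :: "nat \<Rightarrow> nat \<Rightarrow> nat list set" where
  "decks m n = {w. length w = m * n \<and> set w \<subseteq> {0..<n} \<and> (\<forall>i<n. count_list w i = m)}"

text \<open>A (deterministic) strategy maps the history so far (list of pairs (guess, feedback))
  to the next guess.  It is valid for n if it always guesses in {0..<n}.\<close>
type_synonym strategy = "(nat \<times> bool) list \<Rightarrow> nat"

definition valid_strategy :: "nat \<Rightarrow> strategy \<Rightarrow> bool" where
  "valid_strategy n S \<longleftrightarrow> (\<forall>h. S h < n)"

text \<open>history S pi s = h_s: the history after s guesses (position t-1 of the list holds (g_t, y_t)).\<close>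
fun history :: "strategy \<Rightarrow> nat list \<Rightarrow> nat \<Rightarrow> (nat \<times> bool) list" where
  "history S \<pi> 0 = []"
| "history S \<pi> (Suc s) =
     (let h = history S \<pi> s; g = S h in h @ [(g, \<pi> ! s = g)])"

definition full_history :: "strategy \<Rightarrow> nat \<Rightarrow> nat \<Rightarrow> nat list \<Rightarrow> (nat \<times> bool) list" where
  "full_history S m n \<pi> = history S \<pi> (m * n)"

definition guess_count :: "nat \<Rightarrow> (nat \<times> bool) list \<Rightarrow> nat" where
  "guess_count i h = card {r. r < length h \<and> fst (h ! r) = i}"

text \<open>Position k (0-indexed; the (k+1)-th guess) of h is subcritical iff
  a_{g}(h_k) < eps*m*n, where g is the guess made there.\<close>
definition subcritical :: "real \<Rightarrow> nat \<Rightarrow> nat \<Rightarrow> (nat \<times> bool) list \<Rightarrow> nat \<Rightarrow> bool" where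
  "subcritical \<epsilon> m n h k \<longleftrightarrow> real (guess_count (fst (h ! k)) (take k h)) < \<epsilon> * real m * real n"

definition b0 :: "real \<Rightarrow> nat \<Rightarrow> nat \<Rightarrow> (nat \<times> bool) list \<Rightarrow> nat" where
  "b0 \<epsilon> m n h = card {k. k < length h \<and> subcritical \<epsilon> m n h k}"

definition Y0 :: "real \<Rightarrow> nat \<Rightarrow> nat \<Rightarrow> (nat \<times> bool) list \<Rightarrow> nat" where
  "Y0 \<epsilon> m n h = card {k. k < length h \<and> subcritical \<epsilon> m n h k \<and> snd (h ! k)}"

end

theory Submission
  imports Defs
begin

text \<open>Reveal the deck one card at a time. Given the history \<open>h\<close> of the first \<open>k\<close> guesses,
  the card at position \<open>k\<close> equals the guess \<open>g\<close> with probability at most \<open>m / |U|\<close>, where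
  \<open>U\<close> is the set of positions whose card could be swapped with a \<open>g\<close> at position \<open>k\<close>
  without changing \<open>h\<close> (all later positions and the earlier misses on symbols other
  than \<open>g\<close>): swapping is injective on decks, and a deck holds only \<open>m\<close> copies of \<open>g\<close>.
  For a subcritical guess made while at most \<open>\<delta> m n\<close> guesses have been correct,
  \<open>|U| \<ge> (1 - \<epsilon> - \<delta>) m n\<close>. Hence \<open>exp (\<theta> X - \<alpha> B)\<close>, where \<open>B\<close> and \<open>X\<close> count such
  guesses and such correct guesses and \<open>\<alpha> = (e\<^sup>\<theta> - 1) / ((1 - \<epsilon> - \<delta>) n)\<close>, is a
  supermartingale, and since \<open>b\<^sub>0 \<ge> \<epsilon> m n\<close>, Markov's inequality bounds the probability that
  \<open>X\<close> exceeds \<open>(1 + 4\<epsilon>) B / n\<close>. Likewise the expected number of correct guesses is at most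
  \<open>m H\<^sub>m\<^sub>n \<le> 2 m \<surd>(m n)\<close>, so for large \<open>n\<close> it rarely exceeds \<open>\<delta> m n\<close>, and while it does
  not, \<open>X = Y\<^sub>0\<close> and \<open>B = b\<^sub>0\<close>.\<close>

lemma length_history [simp]: "length (history S \<pi> k) = k"
  by (induction k) (simp_all add: Let_def)

lemma history_Suc [simp]:
  "history S \<pi> (Suc k) = history S \<pi> k @ [(S (history S \<pi> k), \<pi> ! k = S (history S \<pi> k))]"
  by (simp add: Let_def)

declare history.simps(2) [simp del]

lemma take_history: "j \<le> k \<Longrightarrow> take j (history S \<pi> k) = history S \<pi> j"
  by (induction k) (auto simp: le_Suc_eq)

lemma nth_history:
  assumes "j < k"
  shows "history S \<pi> k ! j = (S (history S \<pi> j), \<pi> ! j = S (history S \<pi> j))"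
proof -
  have "history S \<pi> k ! j = take (Suc j) (history S \<pi> k) ! j" by simp
  also have "\<dots> = history S \<pi> (Suc j) ! j" using assms by (simp add: take_history)
  finally show ?thesis by (simp add: nth_append)
qed

lemma history_eq_if_same_feedback:
  assumes "\<And>s. s < k \<Longrightarrow> \<pi>' ! s = fst (history S \<pi> k ! s) \<longleftrightarrow> \<pi> ! s = fst (history S \<pi> k ! s)"
  shows "history S \<pi>' k = history S \<pi> k"
  using assms
proof (induction k)
  case (Suc k)
  have "history S \<pi>' k = history S \<pi> k"
  proof (rule Suc.IH)
    fix s assume "s < k"
    then show "\<pi>' ! s = fst (history S \<pi> k ! s) \<longleftrightarrow> \<pi> ! s = fst (history S \<pi> k ! s)"
      using Suc.prems[of s] by (simp add: nth_append)
  qed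
  moreover have "\<pi>' ! k = S (history S \<pi> k) \<longleftrightarrow> \<pi> ! k = S (history S \<pi> k)"
    using Suc.prems[of k] by (simp add: nth_append)
  ultimately show ?case by simp
qed simp

definition count_steps :: "((nat \<times> bool) list \<Rightarrow> nat \<times> bool \<Rightarrow> bool) \<Rightarrow> (nat \<times> bool) list \<Rightarrow> nat"
  where "count_steps P h = card {j. j < length h \<and> P (take j h) (h ! j)}"

abbreviation hits :: "(nat \<times> bool) list \<Rightarrow> nat"
  where "hits \<equiv> count_steps (\<lambda>_ x. snd x)"

lemma count_steps_Nil [simp]: "count_steps P [] = 0"
  by (simp add: count_steps_def)

lemma count_steps_snoc [simp]: "count_steps P (h @ [x]) = count_steps P h + of_bool (P h x)"
proof -
  have "{j. j < length (h @ [x]) \<and> P (take j (h @ [x])) ((h @ [x]) ! j)} =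
        {j. j < length h \<and> P (take j h) (h ! j)} \<union> (if P h x then {length h} else {})"
    by (auto simp: nth_append less_Suc_eq)
  then show ?thesis
    by (simp add: count_steps_def card_Un_disjoint)
qed

lemma count_steps_take_le: "count_steps P (take i h) \<le> count_steps P h"
  unfolding count_steps_def by (rule card_mono) (auto simp: min_def split: if_splits)

lemma Y0_eq_count_steps:
  "Y0 \<epsilon> m n h = count_steps (\<lambda>h' x. real (guess_count (fst x) h') < \<epsilon> * m * n \<and> snd x) h"
  by (simp add: Y0_def count_steps_def subcritical_def)

lemma b0_eq_count_steps:
  "b0 \<epsilon> m n h = count_steps (\<lambda>h' x. real (guess_count (fst x) h') < \<epsilon> * m * n) h"
  by (simp add: b0_def count_steps_def subcritical_def)

lemma finite_decks: "finite (decks m n)"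
proof (rule finite_subset)
  show "decks m n \<subseteq> {xs. set xs \<subseteq> {0..<n} \<and> length xs = m * n}"
    by (auto simp: decks_def)
qed (simp add: finite_lists_length_eq)

lemma decks_nonempty: "decks m n \<noteq> {}"
proof -
  define w where "w n = concat (map (\<lambda>i. replicate m i) [0..<n])" for n
  have "length (w n) = m * n \<and> set (w n) \<subseteq> {0..<n} \<and>
      (\<forall>i. count_list (w n) i = (if i < n then m else 0))"
  proof (induction n)
    case (Suc n)
    have "count_list (replicate m n) i = (if i = n then m else 0)" for i
      by (induction m) auto
    then show ?case using Suc by (auto simp: w_def)
  qed (simp add: w_def)
  then have "w n \<in> decks m n" by (simp add: decks_def)
  then show ?thesis by blast
qed

lemma prob_decks:
  "measure_pmf.prob (pmf_of_set (decks m n)) A = card (decks m n \<inter> A) / card (decks m n)"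
  by (simp add: measure_pmf_of_set finite_decks decks_nonempty)

lemma count_list_le_if_in_decks:
  assumes "\<pi> \<in> decks m n" shows "count_list \<pi> g \<le> m"
proof (cases "g < n")
  case False
  then have "g \<notin> set \<pi>" using assms by (auto simp: decks_def)
  then show ?thesis by (simp add: count_list_0_iff)
qed (use assms in \<open>simp add: decks_def\<close>)

lemma decks_mset_eq: "\<pi> \<in> decks m n \<Longrightarrow> mset \<pi>' = mset \<pi> \<Longrightarrow> \<pi>' \<in> decks m n"
  by (auto simp: decks_def count_mset[symmetric] dest: mset_eq_length mset_eq_setD)

text \<open>A card \<open>g\<close> at position \<open>length h\<close> can be exchanged with the card at any of these
  positions without altering the history \<open>h\<close>.\<close>
definition swappable_positions :: "nat \<Rightarrow> (nat \<times> bool) list \<Rightarrow> nat \<Rightarrow> nat set" where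
  "swappable_positions M h g = {u. u < M \<and> (length h \<le> u \<or> fst (h ! u) \<noteq> g \<and> \<not> snd (h ! u))}"

lemma card_swappable_positions_ge_remaining:
  "M - length h \<le> card (swappable_positions M h g)"
proof -
  have "{length h..<M} \<subseteq> swappable_positions M h g"
    by (auto simp: swappable_positions_def)
  then have "card {length h..<M} \<le> card (swappable_positions M h g)"
    by (rule card_mono[rotated]) (simp add: swappable_positions_def)
  then show ?thesis by simp
qed

lemma card_swappable_positions_ge:
  assumes "length h \<le> M"
  shows "M \<le> card (swappable_positions M h g) + guess_count g h + hits h"
proof -
  have "{..<M} \<subseteq> swappable_positions M h g \<union> {r. r < length h \<and> fst (h ! r) = g}
      \<union> {r. r < length h \<and> snd (h ! r)}"
    using assms by (auto simp: swappable_positions_def)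
  then have "card {..<M} \<le> card (swappable_positions M h g \<union> {r. r < length h \<and> fst (h ! r) = g}
      \<union> {r. r < length h \<and> snd (h ! r)})"
    by (rule card_mono[rotated]) (simp add: swappable_positions_def)
  also have "\<dots> \<le> card (swappable_positions M h g) + card {r. r < length h \<and> fst (h ! r) = g}
      + card {r. r < length h \<and> snd (h ! r)}"
    by (meson card_Un_le add_le_mono le_trans order_refl)
  finally show ?thesis by (simp add: guess_count_def count_steps_def)
qed

lemma card_hit_le_card_swapped:
  assumes h: "length h = k" and k: "k < m * n" and u: "u \<in> swappable_positions (m * n) h g"
  shows "card {\<pi> \<in> decks m n. history S \<pi> k = h \<and> \<pi> ! k = g}
       \<le> card {\<pi> \<in> decks m n. history S \<pi> k = h \<and> \<pi> ! u = g}"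
proof (cases "u = k")
  case False
  define swap where "swap \<pi> = \<pi>[k := \<pi> ! u, u := \<pi> ! k]" for \<pi> :: "nat list"
  have u_lt: "u < m * n" using u by (simp add: swappable_positions_def)
  have swap_swap: "swap (swap \<pi>) = \<pi>" if "length \<pi> = m * n" for \<pi>
    using that k u_lt False by (intro nth_equalityI) (auto simp: swap_def nth_list_update)
  have swap_in: "swap \<pi> \<in> {\<pi> \<in> decks m n. history S \<pi> k = h \<and> \<pi> ! u = g}"
    if \<pi>: "\<pi> \<in> decks m n" "history S \<pi> k = h" "\<pi> ! k = g" for \<pi>
  proof -
    have len: "length \<pi> = m * n" using \<pi>(1) by (simp add: decks_def)
    have "swap \<pi> \<in> decks m n"
      using len k u_lt by (intro decks_mset_eq[OF \<pi>(1)]) (simp add: swap_def mset_swap)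
    moreover have "history S (swap \<pi>) k = history S \<pi> k"
    proof (rule history_eq_if_same_feedback)
      fix s assume "s < k"
      show "swap \<pi> ! s = fst (history S \<pi> k ! s) \<longleftrightarrow> \<pi> ! s = fst (history S \<pi> k ! s)"
      proof (cases "s = u")
        case True
        then have "fst (h ! u) \<noteq> g" "\<not> snd (h ! u)"
          using u \<open>s < k\<close> h by (auto simp: swappable_positions_def)
        moreover have "snd (h ! u) \<longleftrightarrow> \<pi> ! u = fst (h ! u)"
          using nth_history[OF \<open>s < k\<close>, of S \<pi>] \<pi>(2) True by simp
        moreover have "swap \<pi> ! u = g"
          using len k u_lt \<pi>(3) by (simp add: swap_def)
        ultimately show ?thesis using True \<pi>(2) by simp
      next
        case False
        then have "swap \<pi> ! s = \<pi> ! s"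
          using \<open>s < k\<close> by (simp add: swap_def)
        then show ?thesis by simp
      qed
    qed
    moreover have "swap \<pi> ! u = g" using len k u_lt \<pi>(3) by (simp add: swap_def)
    ultimately show ?thesis using \<pi>(2) by simp
  qed
  show ?thesis
  proof (rule card_inj_on_le)
    show "inj_on swap {\<pi> \<in> decks m n. history S \<pi> k = h \<and> \<pi> ! k = g}"
      by (rule inj_on_inverseI[where g = swap]) (simp add: swap_swap decks_def)
    show "swap ` {\<pi> \<in> decks m n. history S \<pi> k = h \<and> \<pi> ! k = g}
        \<subseteq> {\<pi> \<in> decks m n. history S \<pi> k = h \<and> \<pi> ! u = g}"
      using swap_in by blast
  qed (simp add: finite_decks)
qed simp

lemma finite_swappable_positions [simp]: "finite (swappable_positions M h g)"
  by (simp add: swappable_positions_def)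

text \<open>Double counting: each deck holds at most \<open>m\<close> copies of \<open>g\<close>.\<close>
lemma card_hit_mult_card_swappable_le:
  assumes h: "length h = k" and k: "k < m * n"
  shows "card {\<pi> \<in> decks m n. history S \<pi> k = h \<and> \<pi> ! k = g} * card (swappable_positions (m * n) h g)
       \<le> m * card {\<pi> \<in> decks m n. history S \<pi> k = h}"
proof -
  let ?U = "swappable_positions (m * n) h g"
  let ?D = "{\<pi> \<in> decks m n. history S \<pi> k = h}"
  have fin: "finite ?D" by (simp add: finite_decks)
  have "card {\<pi> \<in> decks m n. history S \<pi> k = h \<and> \<pi> ! k = g} * card ?U
      = (\<Sum>u\<in>?U. card {\<pi> \<in> decks m n. history S \<pi> k = h \<and> \<pi> ! k = g})"
    by simp
  also have "\<dots> \<le> (\<Sum>u\<in>?U. card {\<pi> \<in> decks m n. history S \<pi> k = h \<and> \<pi> ! u = g})"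
    by (rule sum_mono) (rule card_hit_le_card_swapped[OF h k])
  also have "\<dots> = (\<Sum>u\<in>?U. \<Sum>\<pi>\<in>?D. of_bool (\<pi> ! u = g))"
    using fin by (simp add: Collect_conj_eq Int_assoc)
  also have "\<dots> = (\<Sum>\<pi>\<in>?D. card (?U \<inter> {u. \<pi> ! u = g}))"
    by (subst sum.swap) simp
  also have "\<dots> \<le> (\<Sum>\<pi>\<in>?D. m)"
  proof (rule sum_mono)
    fix \<pi> assume \<pi>: "\<pi> \<in> ?D"
    then have "?U \<inter> {u. \<pi> ! u = g} \<subseteq> {u. u < length \<pi> \<and> \<pi> ! u = g}"
      by (auto simp: swappable_positions_def decks_def)
    then have "card (?U \<inter> {u. \<pi> ! u = g}) \<le> card {u. u < length \<pi> \<and> \<pi> ! u = g}"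
      by (rule card_mono[rotated]) simp
    also have "\<dots> = count_list \<pi> g"
      by (simp add: count_list_eq_length_filter length_filter_conv_card eq_commute)
    also have "\<dots> \<le> m"
      using \<pi> count_list_le_if_in_decks by blast
    finally show "card (?U \<inter> {u. \<pi> ! u = g}) \<le> m" .
  qed
  finally show ?thesis by (simp add: mult.commute)
qed

lemma card_hit_given_history_le:
  fixes p :: real
  assumes h: "length h = k" and k: "k < m * n"
    and p: "real m \<le> p * card (swappable_positions (m * n) h g)"
  shows "card {\<pi> \<in> decks m n. history S \<pi> k = h \<and> \<pi> ! k = g}
       \<le> p * card {\<pi> \<in> decks m n. history S \<pi> k = h}"
proof -
  let ?c = "real (card (swappable_positions (m * n) h g))"
  have "m * n - k \<le> card (swappable_positions (m * n) h g)"
    using card_swappable_positions_ge_remaining h by metis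
  then have c: "0 < ?c" using k by linarith
  have "card {\<pi> \<in> decks m n. history S \<pi> k = h \<and> \<pi> ! k = g} * ?c
      \<le> real m * card {\<pi> \<in> decks m n. history S \<pi> k = h}"
    using card_hit_mult_card_swappable_le[OF h k, of S g] by (simp flip: of_nat_mult)
  also have "\<dots> \<le> p * ?c * card {\<pi> \<in> decks m n. history S \<pi> k = h}"
    using p by (rule mult_right_mono) simp
  finally have "card {\<pi> \<in> decks m n. history S \<pi> k = h \<and> \<pi> ! k = g} * ?c
      \<le> (p * card {\<pi> \<in> decks m n. history S \<pi> k = h}) * ?c"
    by (simp only: mult_ac)
  then show ?thesis using c by (rule mult_right_le_imp_le)
qed

lemma sum_weighted_hit_le:
  fixes p :: real and \<Phi> :: "(nat \<times> bool) list \<Rightarrow> real"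
  assumes k: "k < m * n" and nonneg: "\<And>h. 0 \<le> \<Phi> h"
    and p: "\<And>h. length h = k \<Longrightarrow> \<Phi> h \<noteq> 0 \<Longrightarrow> real m \<le> p * card (swappable_positions (m * n) h (S h))"
  shows "(\<Sum>\<pi>\<in>decks m n. \<Phi> (history S \<pi> k) * of_bool (\<pi> ! k = S (history S \<pi> k)))
       \<le> p * (\<Sum>\<pi>\<in>decks m n. \<Phi> (history S \<pi> k))"
proof -
  let ?D = "decks m n"
  let ?H = "\<lambda>\<pi>. history S \<pi> k"
  let ?fiber = "\<lambda>h. {\<pi> \<in> ?D. ?H \<pi> = h}"
  let ?hit = "\<lambda>h. {\<pi> \<in> ?D. ?H \<pi> = h \<and> \<pi> ! k = S h}"
  have fin: "finite ?D" "finite (?H ` ?D)" by (simp_all add: finite_decks)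
  have "(\<Sum>\<pi>\<in>?D. \<Phi> (?H \<pi>) * of_bool (\<pi> ! k = S (?H \<pi>)))
      = (\<Sum>h\<in>?H ` ?D. \<Sum>\<pi>\<in>?fiber h. \<Phi> (?H \<pi>) * of_bool (\<pi> ! k = S (?H \<pi>)))"
    by (rule sum.group[symmetric, OF fin]) simp
  also have "\<dots> = (\<Sum>h\<in>?H ` ?D. \<Phi> h * card (?hit h))"
  proof (rule sum.cong[OF refl])
    fix h
    have "(\<Sum>\<pi>\<in>?fiber h. \<Phi> (?H \<pi>) * of_bool (\<pi> ! k = S (?H \<pi>)))
        = (\<Sum>\<pi>\<in>?fiber h. \<Phi> h * of_bool (\<pi> ! k = S h))"
      by (rule sum.cong) simp_all
    also have "\<dots> = \<Phi> h * card (?hit h)"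
      by (simp add: sum_distrib_left[symmetric] finite_decks Collect_conj_eq Int_assoc)
    finally show "(\<Sum>\<pi>\<in>?fiber h. \<Phi> (?H \<pi>) * of_bool (\<pi> ! k = S (?H \<pi>))) = \<Phi> h * card (?hit h)" .
  qed
  also have "\<dots> \<le> (\<Sum>h\<in>?H ` ?D. \<Phi> h * (p * card (?fiber h)))"
  proof (rule sum_mono)
    fix h assume "h \<in> ?H ` ?D"
    then have h: "length h = k" by auto
    show "\<Phi> h * card (?hit h) \<le> \<Phi> h * (p * card (?fiber h))"
    proof (cases "\<Phi> h = 0")
      case False
      show ?thesis
        using card_hit_given_history_le[OF h k p[OF h False]] nonneg by (rule mult_left_mono)
    qed simp
  qed
  also have "\<dots> = (\<Sum>h\<in>?H ` ?D. \<Sum>\<pi>\<in>?fiber h. p * \<Phi> (?H \<pi>))"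
    by (rule sum.cong[OF refl]) simp
  also have "\<dots> = (\<Sum>\<pi>\<in>?D. p * \<Phi> (?H \<pi>))"
    by (rule sum.group[OF fin]) simp
  finally show ?thesis by (simp add: sum_distrib_left)
qed

definition potential ::
  "((nat \<times> bool) list \<Rightarrow> nat \<Rightarrow> bool) \<Rightarrow> real \<Rightarrow> real \<Rightarrow> (nat \<times> bool) list \<Rightarrow> real" where
  "potential Q \<theta> \<alpha> h = exp (\<theta> * count_steps (\<lambda>h' x. Q h' (fst x) \<and> snd x) h
                             - \<alpha> * count_steps (\<lambda>h' x. Q h' (fst x)) h)"

lemma potential_Nil [simp]: "potential Q \<theta> \<alpha> [] = 1"
  by (simp add: potential_def)

lemma potential_snoc:
  "potential Q \<theta> \<alpha> (h @ [(g, b)]) = potential Q \<theta> \<alpha> h * (if Q h g then exp (\<theta> * of_bool b - \<alpha>) else 1)"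
  by (simp add: potential_def algebra_simps flip: exp_add)

lemma sum_potential_history_Suc_le:
  assumes k: "k < m * n" and \<theta>: "0 \<le> \<theta>" and \<alpha>: "\<alpha> = (exp \<theta> - 1) * (p :: real)"
    and Q: "\<And>h g. length h = k \<Longrightarrow> Q h g \<Longrightarrow> real m \<le> p * card (swappable_positions (m * n) h g)"
  shows "(\<Sum>\<pi>\<in>decks m n. potential Q \<theta> \<alpha> (history S \<pi> (Suc k)))
       \<le> (\<Sum>\<pi>\<in>decks m n. potential Q \<theta> \<alpha> (history S \<pi> k))"
proof -
  let ?D = "decks m n"
  let ?H = "\<lambda>\<pi>. history S \<pi> k"
  let ?W = "potential Q \<theta> \<alpha>"
  define \<Phi> where "\<Phi> h = ?W h * of_bool (Q h (S h))" for h
  have \<Phi>_nonneg: "0 \<le> \<Phi> h" for h by (simp add: \<Phi>_def potential_def)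
  have hit: "(\<Sum>\<pi>\<in>?D. \<Phi> (?H \<pi>) * of_bool (\<pi> ! k = S (?H \<pi>))) \<le> p * (\<Sum>\<pi>\<in>?D. \<Phi> (?H \<pi>))"
    using k \<Phi>_nonneg by (rule sum_weighted_hit_le) (auto simp: \<Phi>_def intro: Q)
  have step: "?W (history S \<pi> (Suc k)) = ?W (?H \<pi>) + (exp (- \<alpha>) - 1) * \<Phi> (?H \<pi>)
      + exp (- \<alpha>) * (exp \<theta> - 1) * (\<Phi> (?H \<pi>) * of_bool (\<pi> ! k = S (?H \<pi>)))" for \<pi>
    by (simp add: potential_snoc \<Phi>_def exp_diff exp_minus field_simps)
  have "(\<Sum>\<pi>\<in>?D. ?W (history S \<pi> (Suc k))) = (\<Sum>\<pi>\<in>?D. ?W (?H \<pi>))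
      + (exp (- \<alpha>) - 1) * (\<Sum>\<pi>\<in>?D. \<Phi> (?H \<pi>))
      + exp (- \<alpha>) * (exp \<theta> - 1) * (\<Sum>\<pi>\<in>?D. \<Phi> (?H \<pi>) * of_bool (\<pi> ! k = S (?H \<pi>)))"
    by (simp only: step sum.distrib sum_distrib_left)
  also have "\<dots> \<le> (\<Sum>\<pi>\<in>?D. ?W (?H \<pi>)) + (exp (- \<alpha>) - 1) * (\<Sum>\<pi>\<in>?D. \<Phi> (?H \<pi>))
      + exp (- \<alpha>) * (exp \<theta> - 1) * (p * (\<Sum>\<pi>\<in>?D. \<Phi> (?H \<pi>)))"
    using \<theta> by (intro add_left_mono mult_left_mono[OF hit]) simp
  also have "\<dots> = (\<Sum>\<pi>\<in>?D. ?W (?H \<pi>)) + (exp (- \<alpha>) * (1 + \<alpha>) - 1) * (\<Sum>\<pi>\<in>?D. \<Phi> (?H \<pi>))"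
    by (simp add: \<alpha> algebra_simps)
  also have "\<dots> \<le> (\<Sum>\<pi>\<in>?D. ?W (?H \<pi>))"
  proof -
    have "exp (- \<alpha>) * (1 + \<alpha>) \<le> exp (- \<alpha>) * exp \<alpha>"
      by (intro mult_left_mono exp_ge_add_one_self) simp
    then have "exp (- \<alpha>) * (1 + \<alpha>) - 1 \<le> 0" by (simp add: exp_minus)
    moreover have "0 \<le> (\<Sum>\<pi>\<in>?D. \<Phi> (?H \<pi>))" by (intro sum_nonneg \<Phi>_nonneg)
    ultimately show ?thesis by (simp add: mult_nonpos_nonneg)
  qed
  finally show ?thesis .
qed

lemma sum_potential_history_le:
  assumes "k \<le> m * n" and "0 \<le> \<theta>" and "\<alpha> = (exp \<theta> - 1) * (p :: real)"
    and "\<And>h g. length h < m * n \<Longrightarrow> Q h g \<Longrightarrow> real m \<le> p * card (swappable_positions (m * n) h g)"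
  shows "(\<Sum>\<pi>\<in>decks m n. potential Q \<theta> \<alpha> (history S \<pi> k)) \<le> card (decks m n)"
  using assms(1)
proof (induction k)
  case (Suc k)
  then show ?case
    using sum_potential_history_Suc_le[of k m n \<theta> \<alpha> p Q S] assms(2-4) by fastforce
qed simp

lemma sum_hits_history_le:
  assumes "k \<le> m * n"
  shows "(\<Sum>\<pi>\<in>decks m n. real (hits (history S \<pi> k)))
       \<le> real (card (decks m n)) * real m * (harm (m * n) - harm (m * n - k))"
  using assms
proof (induction k)
  case (Suc k)
  let ?D = "decks m n"
  let ?H = "\<lambda>\<pi>. history S \<pi> k"
  have k: "k < m * n" using Suc.prems by simp
  define d where "d = real (m * n - k)"
  have d: "0 < d" using k by (simp only: d_def of_nat_0_less_iff zero_less_diff)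
  have "(\<Sum>\<pi>\<in>?D. 1 * of_bool (\<pi> ! k = S (?H \<pi>))) \<le> m / d * (\<Sum>\<pi>\<in>?D. 1)"
  proof (rule sum_weighted_hit_le[OF k])
    fix h :: "(nat \<times> bool) list" and g assume "length h = k"
    then have "d \<le> card (swappable_positions (m * n) h g)"
      using card_swappable_positions_ge_remaining of_nat_le_iff unfolding d_def by metis
    then have "m / d * d \<le> m / d * card (swappable_positions (m * n) h g)"
      using d by (intro mult_left_mono) simp_all
    then show "real m \<le> m / d * card (swappable_positions (m * n) h g)"
      using d by simp
  qed simp
  then have hits: "(\<Sum>\<pi>\<in>?D. of_bool (\<pi> ! k = S (?H \<pi>))) \<le> real (card ?D) * real m / real (m * n - k)"
    by (simp add: d_def mult.commute)
  have harm: "harm (m * n - k) = harm (m * n - Suc k) + 1 / real (m * n - k)"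
    using k harm_Suc[of "m * n - Suc k"] by (simp add: Suc_diff_Suc inverse_eq_divide)
  have "(\<Sum>\<pi>\<in>?D. real (hits (history S \<pi> (Suc k))))
      = (\<Sum>\<pi>\<in>?D. real (hits (?H \<pi>))) + (\<Sum>\<pi>\<in>?D. of_bool (\<pi> ! k = S (?H \<pi>)))"
    by (simp add: sum.distrib)
  also have "\<dots> \<le> real (card ?D) * real m * (harm (m * n) - harm (m * n - k)) + real (card ?D) * real m / real (m * n - k)"
    using Suc.IH k hits by simp
  also have "\<dots> = real (card ?D) * real m * (harm (m * n) - harm (m * n - Suc k))"
    by (simp add: harm algebra_simps)
  finally show ?case .
qed simp

lemma harm_le_two_sqrt: "harm n \<le> 2 * sqrt (real n)"
proof (induction n)
  case (Suc n)
  have pos: "0 < sqrt (Suc n) + sqrt n" by (simp add: add_pos_nonneg)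
  have "sqrt (Suc n) + sqrt n \<le> 2 * sqrt (Suc n)" by simp
  also have "\<dots> \<le> 2 * Suc n"
    using real_le_lsqrt[of "Suc n" "Suc n"] by (simp add: power2_eq_square)
  finally have le: "sqrt (Suc n) + sqrt n \<le> 2 * Suc n" .
  have "1 / Suc n = 2 / (2 * Suc n)" by (simp add: field_simps)
  also have "\<dots> \<le> 2 / (sqrt (Suc n) + sqrt n)"
    using pos le by (intro frac_le) simp_all
  also have "\<dots> = 2 * (sqrt (Suc n) - sqrt n)"
    using pos by (simp add: field_simps)
  finally show ?case using Suc by (simp add: harm_Suc inverse_eq_divide)
qed (simp add: harm_def)

text \<open>For such a guess at least \<open>(1 - \<epsilon> - \<delta>) m n\<close> positions are swappable, which bounds
  its hit probability by \<open>1 / ((1 - \<epsilon> - \<delta>) n)\<close>.\<close>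
definition counted_guess :: "real \<Rightarrow> real \<Rightarrow> nat \<Rightarrow> nat \<Rightarrow> (nat \<times> bool) list \<Rightarrow> nat \<Rightarrow> bool" where
  "counted_guess \<epsilon> \<delta> m n h g \<longleftrightarrow> real (guess_count g h) < \<epsilon> * m * n \<and> real (hits h) \<le> \<delta> * m * n"

lemma counted_guess_card_swappable_positions:
  assumes h: "length h < m * n" and g: "counted_guess \<epsilon> \<delta> m n h g" and \<epsilon>\<delta>: "\<epsilon> + \<delta> < 1" and n: "0 < n"
  shows "real m \<le> 1 / (n * (1 - \<epsilon> - \<delta>)) * card (swappable_positions (m * n) h g)"
proof -
  have "real (m * n) \<le> card (swappable_positions (m * n) h g) + real (guess_count g h) + real (hits h)"
    using card_swappable_positions_ge[of h "m * n" g] h by linarith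
  then have "m * (n * (1 - \<epsilon> - \<delta>)) \<le> card (swappable_positions (m * n) h g)"
    using g by (simp add: counted_guess_def algebra_simps)
  moreover have "0 < n * (1 - \<epsilon> - \<delta>)" using \<epsilon>\<delta> n by simp
  ultimately show ?thesis by (simp add: field_simps)
qed

lemma count_steps_cong:
  "(\<And>j. j < length h \<Longrightarrow> P (take j h) (h ! j) \<longleftrightarrow> P' (take j h) (h ! j))
    \<Longrightarrow> count_steps P h = count_steps P' h"
  unfolding count_steps_def by (rule arg_cong[where f = card]) auto

lemma count_steps_counted_guess_eq:
  assumes "real (hits h) \<le> \<delta> * m * n"
  shows "count_steps (\<lambda>h' x. counted_guess \<epsilon> \<delta> m n h' (fst x) \<and> snd x) h = Y0 \<epsilon> m n h"
    and "count_steps (\<lambda>h' x. counted_guess \<epsilon> \<delta> m n h' (fst x)) h = b0 \<epsilon> m n h"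
proof -
  have "real (hits (take j h)) \<le> \<delta> * m * n" for j
    using count_steps_take_le[of _ j h] assms by (meson of_nat_le_iff order.trans)
  then have "counted_guess \<epsilon> \<delta> m n (take j h) g \<longleftrightarrow> real (guess_count g (take j h)) < \<epsilon> * m * n"
    for j g
    by (simp add: counted_guess_def)
  then show "count_steps (\<lambda>h' x. counted_guess \<epsilon> \<delta> m n h' (fst x) \<and> snd x) h = Y0 \<epsilon> m n h"
    and "count_steps (\<lambda>h' x. counted_guess \<epsilon> \<delta> m n h' (fst x)) h = b0 \<epsilon> m n h"
    unfolding Y0_eq_count_steps b0_eq_count_steps by (simp_all cong: count_steps_cong)
qed

text \<open>The first \<open>\<epsilon> m n\<close> guesses are all subcritical.\<close>
lemma b0_full_history_ge:
  assumes "\<epsilon> \<le> 1"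
  shows "\<epsilon> * m * n \<le> real (b0 \<epsilon> m n (full_history S m n \<pi>))"
proof -
  let ?H = "full_history S m n \<pi>"
  let ?N = "nat \<lceil>\<epsilon> * m * n\<rceil>"
  have len: "length ?H = m * n" by (simp add: full_history_def)
  have "\<epsilon> * m * n \<le> real (m * n)"
    using mult_right_mono[OF assms, of "real m * real n"] by (simp add: mult.assoc)
  then have N: "?N \<le> m * n" by (simp add: nat_le_iff ceiling_le_iff)
  have "{..<?N} \<subseteq> {k. k < length ?H \<and> subcritical \<epsilon> m n ?H k}"
  proof safe
    fix k assume "k < ?N"
    then have k: "k < m * n" "real k < \<epsilon> * m * n"
      using N by (linarith, simp add: zless_nat_eq_int_zless less_ceiling_iff)
    have "guess_count (fst (?H ! k)) (take k ?H) \<le> card {..<k}"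
      unfolding guess_count_def by (rule card_mono) (auto simp: len k)
    then show "subcritical \<epsilon> m n ?H k" using k by (simp add: subcritical_def)
    show "k < length ?H" using k len by simp
  qed
  then have "?N \<le> b0 \<epsilon> m n ?H"
    unfolding b0_def by (metis card_lessThan card_mono finite_Collect_conjI finite_Collect_less_nat)
  then show ?thesis using real_nat_ceiling_ge[of "\<epsilon> * m * n"] by linarith
qed

lemma potential_exponent_gap:
  assumes "0 < \<epsilon>" "\<epsilon> \<le> (1 / 8 :: real)"
  shows "\<epsilon>^2 / 2 \<le> \<epsilon> / 2 * (1 + 4 * \<epsilon>) - (exp (\<epsilon> / 2) - 1) / (1 - \<epsilon> - \<epsilon> / 4)"
proof -
  define q where "q = 1 - \<epsilon> - \<epsilon> / 4"
  have q: "0 < q" using assms by (simp add: q_def)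
  have "exp (\<epsilon> / 2) * (1 - \<epsilon> / 2) \<le> exp (\<epsilon> / 2) * exp (- (\<epsilon> / 2))"
    using exp_ge_add_one_self[of "- (\<epsilon> / 2)"] by (intro mult_left_mono) simp_all
  then have "exp (\<epsilon> / 2) \<le> 1 / (1 - \<epsilon> / 2)"
    using assms by (simp add: exp_minus field_simps)
  then have "(exp (\<epsilon> / 2) - 1) / q \<le> (1 / (1 - \<epsilon> / 2) - 1) / q"
    using q by (intro divide_right_mono) simp_all
  also have "\<dots> = \<epsilon> / 2 / ((1 - \<epsilon> / 2) * q)"
    using assms q by (simp add: field_simps)
  also have "\<dots> \<le> \<epsilon> / 2 * (1 + 3 * \<epsilon>)"
  proof -
    have "(1 + 3 * \<epsilon>) * (1 - \<epsilon> / 2) * q = 1 + \<epsilon> * (5/4 - 37/8 * \<epsilon> + 15/8 * \<epsilon>^2)"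
      by (simp add: q_def algebra_simps power2_eq_square)
    moreover have "0 \<le> 5/4 - 37/8 * \<epsilon> + 15/8 * \<epsilon>^2"
      using assms by (simp add: power2_eq_square)
    ultimately have "1 \<le> (1 + 3 * \<epsilon>) * ((1 - \<epsilon> / 2) * q)"
      using assms by (simp add: mult.assoc)
    then have "\<epsilon> / 2 \<le> \<epsilon> / 2 * (1 + 3 * \<epsilon>) * ((1 - \<epsilon> / 2) * q)"
      using mult_left_mono[of 1 _ "\<epsilon> / 2"] assms by (simp add: mult.assoc)
    moreover have "0 < (1 - \<epsilon> / 2) * q" using assms q by simp
    ultimately show ?thesis by (simp only: pos_divide_le_eq)
  qed
  finally have "(exp (\<epsilon> / 2) - 1) / q \<le> \<epsilon> / 2 * (1 + 3 * \<epsilon>)" .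
  moreover have "\<epsilon> / 2 * (1 + 4 * \<epsilon>) = \<epsilon> / 2 * (1 + 3 * \<epsilon>) + \<epsilon>^2 / 2"
    by (simp add: power2_eq_square algebra_simps)
  ultimately show ?thesis unfolding q_def[symmetric] by linarith
qed
definition subcritical_potential :: "real \<Rightarrow> nat \<Rightarrow> nat \<Rightarrow> (nat \<times> bool) list \<Rightarrow> real" where
  "subcritical_potential \<epsilon> m n =
     potential (counted_guess \<epsilon> (\<epsilon> / 4) m n) (\<epsilon> / 2) ((exp (\<epsilon> / 2) - 1) / (n * (1 - \<epsilon> - \<epsilon> / 4)))"

lemma sum_subcritical_potential_le:
  assumes "0 < \<epsilon>" "\<epsilon> \<le> 1/8" "0 < n"
  shows "(\<Sum>\<pi>\<in>decks m n. subcritical_potential \<epsilon> m n (full_history S m n \<pi>)) \<le> card (decks m n)"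
  unfolding subcritical_potential_def full_history_def
proof (rule sum_potential_history_le)
  show "(exp (\<epsilon> / 2) - 1) / (n * (1 - \<epsilon> - \<epsilon> / 4)) = (exp (\<epsilon> / 2) - 1) * (1 / (n * (1 - \<epsilon> - \<epsilon> / 4)))"
    by simp
  show "real m \<le> 1 / (n * (1 - \<epsilon> - \<epsilon> / 4)) * card (swappable_positions (m * n) h g)"
    if "length h < m * n" "counted_guess \<epsilon> (\<epsilon> / 4) m n h g" for h g
    using counted_guess_card_swappable_positions[OF that] assms by simp
qed (use assms in simp_all)

lemma exp_le_subcritical_potential:
  assumes \<epsilon>: "0 < \<epsilon>" "\<epsilon> \<le> 1/8" and n: "0 < n"
    and few: "real (hits (full_history S m n \<pi>)) \<le> \<epsilon> / 4 * m * n"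
    and many: "(1 + 4 * \<epsilon>) * real (b0 \<epsilon> m n (full_history S m n \<pi>)) / real n
               < real (Y0 \<epsilon> m n (full_history S m n \<pi>))"
  shows "exp (\<epsilon>^4 * m) \<le> subcritical_potential \<epsilon> m n (full_history S m n \<pi>)"
proof -
  define Y where "Y = real (Y0 \<epsilon> m n (full_history S m n \<pi>))"
  define B where "B = real (b0 \<epsilon> m n (full_history S m n \<pi>))"
  define \<alpha> where "\<alpha> = (exp (\<epsilon> / 2) - 1) / (n * (1 - \<epsilon> - \<epsilon> / 4))"
  have potential: "subcritical_potential \<epsilon> m n (full_history S m n \<pi>) = exp (\<epsilon> / 2 * Y - \<alpha> * B)"
    using count_steps_counted_guess_eq[OF few]
    by (simp add: subcritical_potential_def potential_def Y_def B_def \<alpha>_def)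
  have B: "\<epsilon> * m * n \<le> B"
    using b0_full_history_ge \<epsilon> by (simp add: B_def)
  have gap: "\<epsilon>^2 / 2 \<le> \<epsilon> / 2 * (1 + 4 * \<epsilon>) - n * \<alpha>"
    using potential_exponent_gap[OF \<epsilon>] n by (simp add: \<alpha>_def)
  have "\<epsilon> / 2 * ((1 + 4 * \<epsilon>) * B / n) < \<epsilon> / 2 * Y"
    using many \<epsilon> by (intro mult_strict_left_mono) (simp_all add: Y_def B_def)
  moreover have "\<epsilon> / 2 * ((1 + 4 * \<epsilon>) * B / n) - \<alpha> * B = B / n * (\<epsilon> / 2 * (1 + 4 * \<epsilon>) - n * \<alpha>)"
    using n by (simp add: field_simps)
  moreover have "\<epsilon> * m * (\<epsilon>^2 / 2) \<le> B / n * (\<epsilon> / 2 * (1 + 4 * \<epsilon>) - n * \<alpha>)"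
  proof (rule mult_mono)
    show "\<epsilon> * m \<le> B / n" using B n by (simp add: field_simps)
  qed (use gap \<epsilon> in \<open>simp_all add: B_def\<close>)
  moreover have "\<epsilon>^4 * m \<le> \<epsilon> * m * (\<epsilon>^2 / 2)"
  proof -
    have "\<epsilon>^4 = \<epsilon>^3 * \<epsilon>" by (simp add: power_Suc2 numeral_eq_Suc)
    also have "\<dots> \<le> \<epsilon>^3 / 2" using \<epsilon> by (simp add: mult_left_le)
    finally have "\<epsilon>^4 \<le> \<epsilon> * (\<epsilon>^2 / 2)" by (simp add: power2_eq_square power3_eq_cube)
    then have "\<epsilon>^4 * m \<le> \<epsilon> * (\<epsilon>^2 / 2) * m" by (rule mult_right_mono) simp
    then show ?thesis by (simp only: mult_ac)
  qed
  ultimately have "\<epsilon>^4 * m \<le> \<epsilon> / 2 * Y - \<alpha> * B" by linarith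
  then show ?thesis by (simp add: potential)
qed

lemma card_many_subcritical_hits_few_hits_le:
  assumes "0 < \<epsilon>" "\<epsilon> \<le> 1/8" "0 < n"
  shows "card {\<pi> \<in> decks m n. real (hits (full_history S m n \<pi>)) \<le> \<epsilon> / 4 * m * n \<and>
            (1 + 4 * \<epsilon>) * real (b0 \<epsilon> m n (full_history S m n \<pi>)) / real n
              < real (Y0 \<epsilon> m n (full_history S m n \<pi>))} * exp (\<epsilon>^4 * m)
       \<le> card (decks m n)"
    (is "real (card ?A) * _ \<le> _")
proof -
  have "card ?A * exp (\<epsilon>^4 * m) = (\<Sum>\<pi>\<in>?A. exp (\<epsilon>^4 * m))" by simp
  also have "\<dots> \<le> (\<Sum>\<pi>\<in>?A. subcritical_potential \<epsilon> m n (full_history S m n \<pi>))"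
    using exp_le_subcritical_potential[OF assms] by (intro sum_mono) blast
  also have "\<dots> \<le> (\<Sum>\<pi>\<in>decks m n. subcritical_potential \<epsilon> m n (full_history S m n \<pi>))"
    by (intro sum_mono2) (simp_all add: finite_decks subcritical_potential_def potential_def)
  also have "\<dots> \<le> card (decks m n)"
    by (rule sum_subcritical_potential_le[OF assms])
  finally show ?thesis .
qed

lemma card_many_hits_le:
  fixes t :: real
  shows "card {\<pi> \<in> decks m n. t < real (hits (full_history S m n \<pi>))} * t
       \<le> real (card (decks m n)) * real m * harm (m * n)"
proof -
  let ?A = "{\<pi> \<in> decks m n. t < real (hits (full_history S m n \<pi>))}"
  have "card ?A * t = (\<Sum>\<pi>\<in>?A. t)" by simp
  also have "\<dots> \<le> (\<Sum>\<pi>\<in>?A. real (hits (full_history S m n \<pi>)))"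
    by (intro sum_mono) simp
  also have "\<dots> \<le> (\<Sum>\<pi>\<in>decks m n. real (hits (full_history S m n \<pi>)))"
    by (intro sum_mono2) (simp_all add: finite_decks)
  also have "\<dots> \<le> real (card (decks m n)) * real m * harm (m * n)"
    using sum_hits_history_le[of "m * n" m n S] by (simp add: full_history_def harm_def)
  finally show ?thesis .
qed

lemma harm_le_exp_of_large_n:
  fixes \<epsilon> :: real
  assumes \<epsilon>: "0 < \<epsilon>" and m: "0 < m" and large: "64 * real m * exp (2 * \<epsilon>^4 * real m) / \<epsilon>^2 \<le> real n"
  shows "m * harm (m * n) \<le> exp (- (\<epsilon>^4 * m)) * (\<epsilon> / 4 * m * n)"
proof -
  define E where "E = exp (\<epsilon>^4 * m)"
  define r where "r = sqrt (m * n)"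
  have E: "0 < E" by (simp add: E_def)
  have "0 < 64 * real m * exp (2 * \<epsilon>^4 * real m) / \<epsilon>^2" using \<epsilon> m by simp
  then have n: "0 < real n" using large by linarith
  have "exp (2 * \<epsilon>^4 * real m) = E^2"
    by (simp add: E_def power2_eq_square flip: exp_add)
  then have "64 * m * E^2 \<le> \<epsilon>^2 * n"
    using large \<epsilon> by (simp add: pos_divide_le_eq mult.commute)
  then have "64 * m * E^2 * n \<le> \<epsilon>^2 * n * n"
    using n by (intro mult_right_mono) simp_all
  moreover have "(8 * r * E)^2 = 64 * m * E^2 * n"
    by (simp add: r_def power_mult_distrib)
  moreover have "(\<epsilon> * n)^2 = \<epsilon>^2 * n * n"
    by (simp add: power_mult_distrib power2_eq_square)
  ultimately have "(8 * r * E)^2 \<le> (\<epsilon> * n)^2"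
    by linarith
  then have root: "8 * r * E \<le> \<epsilon> * n"
    by (rule power2_le_imp_le) (use \<epsilon> n in simp)
  have inv: "exp (- (\<epsilon>^4 * m)) = 1 / E"
    by (simp add: E_def exp_minus inverse_eq_divide)
  have "m * harm (m * n) \<le> m * (2 * r)"
    unfolding r_def by (rule mult_left_mono[OF harm_le_two_sqrt]) simp
  also have "\<dots> = m / (4 * E) * (8 * r * E)"
    using E by (simp add: field_simps)
  also have "\<dots> \<le> m / (4 * E) * (\<epsilon> * n)"
    using root E by (intro mult_left_mono) simp_all
  also have "\<dots> = exp (- (\<epsilon>^4 * m)) * (\<epsilon> / 4 * m * n)"
    unfolding inv using E by (simp add: field_simps)
  finally show ?thesis .
qed

definition many_subcritical_hits :: "real \<Rightarrow> nat \<Rightarrow> nat \<Rightarrow> strategy \<Rightarrow> nat list set" where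
  "many_subcritical_hits \<epsilon> m n S =
     {\<pi>. real (Y0 \<epsilon> m n (full_history S m n \<pi>))
            > (1 + 4 * \<epsilon>) * real (b0 \<epsilon> m n (full_history S m n \<pi>)) / real n}"

lemma prob_many_subcritical_hits_le:
  assumes \<epsilon>: "0 < \<epsilon>" "\<epsilon> \<le> 1/8" and n: "0 < n"
    and large: "64 * real m * exp (2 * \<epsilon>^4 * real m) / \<epsilon>^2 \<le> real n"
  shows "measure_pmf.prob (pmf_of_set (decks m n)) (many_subcritical_hits \<epsilon> m n S)
         \<le> 2 * exp (- (\<epsilon>^4 * m))"
proof (cases "m = 0")
  case True
  have "measure_pmf.prob (pmf_of_set (decks m n)) (many_subcritical_hits \<epsilon> m n S) \<le> 1" by (rule measure_pmf.prob_le_1)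
  moreover have "2 * exp (- (\<epsilon>^4 * m)) = 2" using True by simp
  ultimately show ?thesis by linarith
next
  case False
  let ?D = "decks m n"
  let ?H = "full_history S m n"
  let ?t = "\<epsilon> / 4 * m * n"
  let ?A = "{\<pi> \<in> ?D. real (hits (?H \<pi>)) \<le> \<epsilon> / 4 * m * n \<and>
              (1 + 4 * \<epsilon>) * real (b0 \<epsilon> m n (?H \<pi>)) / real n < real (Y0 \<epsilon> m n (?H \<pi>))}"
  let ?M = "{\<pi> \<in> ?D. ?t < real (hits (?H \<pi>))}"
  have D: "0 < real (card ?D)" using finite_decks decks_nonempty by (simp add: card_gt_0_iff)
  have t: "0 < ?t" using \<epsilon> n False by simp
  have "card ?A * exp (\<epsilon>^4 * m) \<le> card ?D"
    by (rule card_many_subcritical_hits_few_hits_le[OF \<epsilon> n])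
  then have "card ?A * exp (\<epsilon>^4 * m) * exp (- (\<epsilon>^4 * m)) \<le> card ?D * exp (- (\<epsilon>^4 * m))"
    by (rule mult_right_mono) simp
  then have A: "card ?A \<le> card ?D * exp (- (\<epsilon>^4 * m))"
    by (simp add: mult.assoc flip: exp_add)
  have harm: "m * harm (m * n) \<le> exp (- (\<epsilon>^4 * m)) * ?t"
    using harm_le_exp_of_large_n[OF \<epsilon>(1) _ large] False by simp
  have "card ?M * ?t \<le> real (card ?D) * real m * harm (m * n)"
    by (rule card_many_hits_le)
  also have "\<dots> = card ?D * (m * harm (m * n))"
    by (simp only: mult.assoc)
  also have "\<dots> \<le> card ?D * (exp (- (\<epsilon>^4 * m)) * ?t)"
    by (rule mult_left_mono[OF harm]) simp
  finally have "card ?M * ?t \<le> card ?D * (exp (- (\<epsilon>^4 * m)) * ?t)" .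
  then have "card ?M * ?t \<le> (card ?D * exp (- (\<epsilon>^4 * m))) * ?t"
    by (simp only: mult.assoc)
  then have M: "card ?M \<le> card ?D * exp (- (\<epsilon>^4 * m))"
    using t by (rule mult_right_le_imp_le)
  have "?D \<inter> (many_subcritical_hits \<epsilon> m n S) \<subseteq> ?A \<union> ?M" by (auto simp: many_subcritical_hits_def not_le)
  then have "card (?D \<inter> (many_subcritical_hits \<epsilon> m n S)) \<le> card (?A \<union> ?M)"
    by (rule card_mono[rotated]) (simp add: finite_decks)
  also have "\<dots> \<le> card ?A + card ?M"
    by (rule card_Un_le)
  finally have "real (card (?D \<inter> (many_subcritical_hits \<epsilon> m n S))) \<le> real (card ?A) + real (card ?M)"
    by (simp only: of_nat_add[symmetric] of_nat_le_iff)
  also have "\<dots> \<le> 2 * (card ?D * exp (- (\<epsilon>^4 * m)))"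
    using A M by linarith
  also have "\<dots> = 2 * exp (- (\<epsilon>^4 * m)) * card ?D"
    by simp
  finally have "real (card (?D \<inter> (many_subcritical_hits \<epsilon> m n S))) \<le> 2 * exp (- (\<epsilon>^4 * m)) * card ?D" .
  then show ?thesis
    unfolding prob_decks by (simp only: pos_divide_le_eq[OF D])
qed

lemma prob_many_subcritical_hits_eventually_le:
  assumes \<epsilon>: "0 < \<epsilon>" "\<epsilon> \<le> 1/8"
  shows "\<exists>N. \<forall>n \<ge> N. \<forall>S. measure_pmf.prob (pmf_of_set (decks m n)) (many_subcritical_hits \<epsilon> m n S)
           \<le> \<epsilon> powr (-2) * exp (- (\<epsilon>^4 * m))"
proof (intro exI[of _ "Suc (nat \<lceil>64 * real m * exp (2 * \<epsilon>^4 * real m) / \<epsilon>^2\<rceil>)"] allI impI)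
  fix n S
  let ?x = "64 * real m * exp (2 * \<epsilon>^4 * real m) / \<epsilon>^2"
  assume "Suc (nat \<lceil>?x\<rceil>) \<le> n"
  then have "real (nat \<lceil>?x\<rceil>) < n" by simp
  then have "0 < n" "?x \<le> n" using real_nat_ceiling_ge[of ?x] by linarith+
  then have "measure_pmf.prob (pmf_of_set (decks m n)) (many_subcritical_hits \<epsilon> m n S)
      \<le> 2 * exp (- (\<epsilon>^4 * m))"
    by (rule prob_many_subcritical_hits_le[OF \<epsilon>])
  also have "\<dots> \<le> \<epsilon> powr (-2) * exp (- (\<epsilon>^4 * m))"
  proof (rule mult_right_mono)
    have "\<epsilon>^2 \<le> (1/8)^2" using \<epsilon> by (intro power_mono) simp_all
    then show "2 \<le> \<epsilon> powr (-2)" using \<epsilon> by (simp add: powr_minus_divide field_simps)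
  qed simp
  finally show "measure_pmf.prob (pmf_of_set (decks m n)) (many_subcritical_hits \<epsilon> m n S)
      \<le> \<epsilon> powr (-2) * exp (- (\<epsilon>^4 * m))" .
qed

theorem lemma3p9:
  shows "\<exists>c c' :: real. c > 0 \<and> c' > 0 \<and>
    (\<forall>\<epsilon> :: real. 0 < \<epsilon> \<and> \<epsilon> \<le> 1/8 \<longrightarrow>
      (\<forall>m :: nat. \<exists>N :: nat. \<forall>n \<ge> N. \<forall>S :: strategy. valid_strategy n S \<longrightarrow>
        measure_pmf.prob (pmf_of_set (decks m n))
          {\<pi>. real (Y0 \<epsilon> m n (full_history S m n \<pi>))
                > (1 + 4 * \<epsilon>) * real (b0 \<epsilon> m n (full_history S m n \<pi>)) / real n}
        \<le> c' * \<epsilon> powr (-2) * exp (- c * \<epsilon> ^ 4 * real m)))"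
  using prob_many_subcritical_hits_eventually_le unfolding many_subcritical_hits_def
  by (intro exI[of _ 1]) (simp; blast)

end
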